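(* Let $F=\mathrm{id}_{K_{\mathrm{cmn}}}\otimes(R\otimes_{R_{\mathrm p}}F_{\mathrm p}):\widehat{\gamma}_{\mathrm{par}}\to\widehat{\gamma}_{\mathrm{vir}}$ and $G=\mathrm{id}_{K_{\mathrm{cmn}}}\otimes(R\otimes_{R_{\mathrm p}}G_{\mathrm p}):\widehat{\gamma}_{\mathrm{vir}}\to\widehat{\gamma}_{\mathrm{hor}}$ be the saddle morphisms, where $F_{\mathrm p}$ is given on the even part by $\begin{pmatrix}0&1\\ q_2^2-q_1^2C&0\end{pmatrix}$ and on the odd part by $\begin{pmatrix}q_2&-q_1\\ q_1C&-q_2\end{pmatrix}$, and $G_{\mathrm p}$ is given on the even part by $\begin{pmatrix}0&1\\ p_2^2-p_1^2C&0\end{pmatrix}$ and on the odd part by $\begin{pmatrix}p_2&-p_1\\ p_1C&-p_2\end{pmatrix}$. Then the composition is null-homotopic: $G\circ F\simeq 0$.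
   Context: Fix $N\ge1$, $w(x)=x^{2N+1}$, $W(x,y)=xy^2+x^{2N+1}$, iterated divided differences $w(x_1,\dots,x_n)=\frac{w(x_1,\dots,x_{n-2},x_{n-1})-w(x_1,\dots,x_{n-2},x_n)}{x_{n-1}-x_n}$. $R=\mathbb{Q}[x_1,\dots,x_4,y_1,\dots,y_4]$, $W_4=\sum W(x_i,y_i)$. Matrix factorizations of $V$: $\mathbb{Z}/2$-graded free modules with odd $D$, $D^2=V$; a morphism is null-homotopic ($\simeq0$) if it equals $DX+XD$ for some odd $R$-linear $X$. $A(i,j)$ is the Koszul matrix factorization (tensor product over $R$ of $Re_0\oplus Re_1$, $De_0=be_1$, $De_1=ae_0$ for each row $(a\mid b)$) with rows $(y_j+y_i\mid x_j(y_j-y_i))$, $(x_j+x_i\mid y_i^2+w(-x_i,x_j))$; $\widehat{\gamma}_{\mathrm{par}}=A(1,3)\otimes A(2,4)$, $\widehat{\gamma}_{\mathrm{vir}}=A(1,4)\otimes A(2,3)$, $\widehat{\gamma}_{\mathrm{hor}}=A(1,2)\otimes A(3,4)$. $R_{\mathrm p}=\mathbb{Q}[p_1,p_2,q_1,q_2,r_1,r_2,C]$, $W_{4,\mathrm p}=p_1q_2r_2+q_1p_2r_2+r_1p_2q_2+p_1q_1r_1C$. Proper matrix factorizations, each of the form $R_{\mathrm p}^2$ (odd) $\xrightarrow{P}$ $R_{\mathrm p}^2$ (even) $\xrightarrow{Q}$ $R_{\mathrm p}^2$ (odd): $\widehat{\gamma}_{\mathrm{par,p}}$ with $P=\begin{pmatrix}p_2&p_1\\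 q_2r_2+q_1r_1C&-(q_2r_1+q_1r_2)\end{pmatrix}$, $Q=\begin{pmatrix}q_1r_2+q_2r_1&p_1\\ q_2r_2+q_1r_1C&-p_2\end{pmatrix}$; $\widehat{\gamma}_{\mathrm{vir,p}}$ with $P=\begin{pmatrix}r_2&r_1\\ p_2q_2+p_1q_1C&-(p_1q_2+p_2q_1)\end{pmatrix}$, $Q=\begin{pmatrix}p_1q_2+p_2q_1&r_1\\ p_2q_2+p_1q_1C&-r_2\end{pmatrix}$; $\widehat{\gamma}_{\mathrm{hor,p}}$ with $P=\begin{pmatrix}q_2&q_1\\ p_2r_2+p_1r_1C&-(p_1r_2+p_2r_1)\end{pmatrix}$, $Q=\begin{pmatrix}p_1r_2+p_2r_1&q_1\\ p_2r_2+p_1r_1C&-q_2\end{pmatrix}$. $\phi_{\mathrm p}:R_{\mathrm p}\to R$: $p_1\mapsto x_2+x_4$, $q_1\mapsto x_3+x_4$, $r_1\mapsto x_1+x_4$, $p_2\mapsto y_2+y_4$, $q_2\mapsto y_3+y_4$, $r_2\mapsto y_1+y_4$, $C\mapsto w(x_1,x_2,-x_3,x_4)+w(x_1,-x_1,x_2,x_4)+w(x_1,-x_1,-x_2,x_4)$; $R\otimes_{R_{\mathrm p}}$ is base change along $\phi_{\mathrm p}$. $K_{\mathrm{cmn}}$ is the Koszul matrix factorization with rows $(x_1+x_2+x_3+x_4\mid A)$, $(y_1+\dots+y_4\mid B)$, $A=-(y_3+y_4)(y_1+y_2+y_4)-y_1y_2+w(-x_1,x_3)+(x_2+x_4)w(x_1,x_2,-x_3)-(x_2+x_4)(x_1+x_4)(w(x_1,-x_1,x_2,x_4)+w(x_1,-x_1,-x_2,x_4))$,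 $B=x_1y_1+x_2y_2+x_3y_3-x_4y_4$; $K_{\mathrm{cmn}}\otimes_R(R\otimes_{R_{\mathrm p}}\widehat{\gamma}_{\bullet,\mathrm p})\cong\widehat{\gamma}_\bullet$ for $\bullet\in\{\mathrm{par},\mathrm{vir},\mathrm{hor}\}$, and $F,G$ are regarded as morphisms between the $\widehat{\gamma}_\bullet$ via these isomorphisms. *)

theory Defs
  imports "HOL-Library.Poly_Mapping" "Jordan_Normal_Form.Matrix"
begin

text \<open>Polynomials over Q in the variables Var 0, Var 1, ... ; x_i = Var (i-1), y_i = Var (i+3).
  Elements of R proper are those whose monomials only involve the variables 0..7.\<close>

type_synonym R = "(nat \<Rightarrow>\<^sub>0 nat) \<Rightarrow>\<^sub>0 rat"

definition Var :: "nat \<Rightarrow> R" where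
  "Var i = Poly_Mapping.single (Poly_Mapping.single i 1) 1"

definition xv :: "nat \<Rightarrow> R" where "xv i = Var (i - 1)"
definition yv :: "nat \<Rightarrow> R" where "yv i = Var (i + 3)"

definition in_R :: "R \<Rightarrow> bool" where
  "in_R f \<longleftrightarrow> (\<forall>m\<in>Poly_Mapping.keys f. Poly_Mapping.keys m \<subseteq> {..<8})"

section \<open>Iterated divided differences of w(x) = x^(2N+1)\<close>

definition divq :: "R \<Rightarrow> R \<Rightarrow> R" where
  "divq n d = (SOME q. d * q = n)"

definition wd1 :: "nat \<Rightarrow> R \<Rightarrow> R" where
  "wd1 N a = a ^ (2 * N + 1)"
definition wd2 :: "nat \<Rightarrow> R \<Rightarrow> R \<Rightarrow> R" where
  "wd2 N a b = divq (wd1 N a - wd1 N b) (a - b)"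
definition wd3 :: "nat \<Rightarrow> R \<Rightarrow> R \<Rightarrow> R \<Rightarrow> R" where
  "wd3 N a b c = divq (wd2 N a b - wd2 N a c) (b - c)"
definition wd4 :: "nat \<Rightarrow> R \<Rightarrow> R \<Rightarrow> R \<Rightarrow> R \<Rightarrow> R" where
  "wd4 N a b c d = divq (wd3 N a b c - wd3 N a b d) (c - d)"

section \<open>Generic matrix-factorization constructions (column-vector convention)\<close>

definition kron :: "'a::semiring_1 mat \<Rightarrow> 'a mat \<Rightarrow> 'a mat" where
  "kron A B = mat (dim_row A * dim_row B) (dim_col A * dim_col B)
     (\<lambda>(i, j). A $$ (i div dim_row B, j div dim_col B) * B $$ (i mod dim_row B, j mod dim_col B))"

text \<open>Grading operator of a Z/2-graded free module of rank n with parity function par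
  (par i = True means basis vector i is odd).\<close>
definition gsign :: "nat \<Rightarrow> (nat \<Rightarrow> bool) \<Rightarrow> 'a::ring_1 mat" where
  "gsign n par = mat n n (\<lambda>(i, j). if i = j then (if par i then - 1 else 1) else 0)"

definition tensor_D :: "'a::comm_ring_1 mat \<Rightarrow> (nat \<Rightarrow> bool) \<Rightarrow> 'a mat \<Rightarrow> 'a mat" where
  "tensor_D DA parA DB = kron DA (1\<^sub>m (dim_row DB)) + kron (gsign (dim_row DA) parA) DB"

definition tensor_par :: "(nat \<Rightarrow> bool) \<Rightarrow> nat \<Rightarrow> (nat \<Rightarrow> bool) \<Rightarrow> nat \<Rightarrow> bool" where
  "tensor_par parA nB parB i = (parA (i div nB) \<noteq> parB (i mod nB))"

text \<open>Rank-one Koszul factorization for a row (a | b): basis e0 (even), e1 (odd),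
  D e0 = b e1, D e1 = a e0.\<close>
definition koszul1 :: "'a::zero \<Rightarrow> 'a \<Rightarrow> 'a mat" where
  "koszul1 a b = mat 2 2 (\<lambda>(i, j). if i = 0 \<and> j = 1 then a else if i = 1 \<and> j = 0 then b else 0)"

definition par_koszul1 :: "nat \<Rightarrow> bool" where "par_koszul1 i = (i = 1)"

definition koszul2 :: "'a::comm_ring_1 \<Rightarrow> 'a \<Rightarrow> 'a \<Rightarrow> 'a \<Rightarrow> 'a mat" where
  "koszul2 a1 b1 a2 b2 = tensor_D (koszul1 a1 b1) par_koszul1 (koszul1 a2 b2)"

definition par_koszul2 :: "nat \<Rightarrow> bool" where
  "par_koszul2 = tensor_par par_koszul1 2 par_koszul1"

text \<open>A proper matrix factorization R^2 (odd) --P--> R^2 (even) --Q--> R^2 (odd):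
  basis indices 0,1 even, 2,3 odd; D = [[0,P],[Q,0]].\<close>
definition mf22 :: "'a::zero mat \<Rightarrow> 'a mat \<Rightarrow> 'a mat" where
  "mf22 P Q = four_block_mat (0\<^sub>m 2 2) P Q (0\<^sub>m 2 2)"

definition par22 :: "nat \<Rightarrow> bool" where "par22 i = (2 \<le> i)"

definition mor22 :: "'a::zero mat \<Rightarrow> 'a mat \<Rightarrow> 'a mat" where
  "mor22 Fe Fo = four_block_mat Fe (0\<^sub>m 2 2) (0\<^sub>m 2 2) Fo"

definition mat22 :: "'a \<Rightarrow> 'a \<Rightarrow> 'a \<Rightarrow> 'a \<Rightarrow> 'a mat" where
  "mat22 a b c d = mat 2 2 (\<lambda>(i, j). if i = 0 then (if j = 0 then a else b) else (if j = 0 then c else d))"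

section \<open>The proper factorizations over R_p (as generic matrices in p1 p2 q1 q2 r1 r2 C)\<close>

definition gpar_p :: "'a::comm_ring_1 \<Rightarrow> 'a \<Rightarrow> 'a \<Rightarrow> 'a \<Rightarrow> 'a \<Rightarrow> 'a \<Rightarrow> 'a \<Rightarrow> 'a mat" where
  "gpar_p p1 p2 q1 q2 r1 r2 C = mf22
     (mat22 p2 p1 (q2*r2 + q1*r1*C) (- (q2*r1 + q1*r2)))
     (mat22 (q1*r2 + q2*r1) p1 (q2*r2 + q1*r1*C) (- p2))"

definition gvir_p :: "'a::comm_ring_1 \<Rightarrow> 'a \<Rightarrow> 'a \<Rightarrow> 'a \<Rightarrow> 'a \<Rightarrow> 'a \<Rightarrow> 'a \<Rightarrow> 'a mat" where
  "gvir_p p1 p2 q1 q2 r1 r2 C = mf22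
     (mat22 r2 r1 (p2*q2 + p1*q1*C) (- (p1*q2 + p2*q1)))
     (mat22 (p1*q2 + p2*q1) r1 (p2*q2 + p1*q1*C) (- r2))"

definition ghor_p :: "'a::comm_ring_1 \<Rightarrow> 'a \<Rightarrow> 'a \<Rightarrow> 'a \<Rightarrow> 'a \<Rightarrow> 'a \<Rightarrow> 'a \<Rightarrow> 'a mat" where
  "ghor_p p1 p2 q1 q2 r1 r2 C = mf22
     (mat22 q2 q1 (p2*r2 + p1*r1*C) (- (p1*r2 + p2*r1)))
     (mat22 (p1*r2 + p2*r1) q1 (p2*r2 + p1*r1*C) (- q2))"

definition Fsad_p :: "'a::comm_ring_1 \<Rightarrow> 'a \<Rightarrow> 'a \<Rightarrow> 'a \<Rightarrow> 'a \<Rightarrow> 'a \<Rightarrow> 'a \<Rightarrow> 'a mat" where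
  "Fsad_p p1 p2 q1 q2 r1 r2 C = mor22
     (mat22 0 1 (q2^2 - q1^2*C) 0) (mat22 q2 (- q1) (q1*C) (- q2))"

definition Gsad_p :: "'a::comm_ring_1 \<Rightarrow> 'a \<Rightarrow> 'a \<Rightarrow> 'a \<Rightarrow> 'a \<Rightarrow> 'a \<Rightarrow> 'a \<Rightarrow> 'a mat" where
  "Gsad_p p1 p2 q1 q2 r1 r2 C = mor22
     (mat22 0 1 (p2^2 - p1^2*C) 0) (mat22 p2 (- p1) (p1*C) (- p2))"

definition phiC :: "nat \<Rightarrow> R" where
  "phiC N = wd4 N (xv 1) (xv 2) (- xv 3) (xv 4) + wd4 N (xv 1) (- xv 1) (xv 2) (xv 4)
          + wd4 N (xv 1) (- xv 1) (- xv 2) (xv 4)"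

text \<open>R \<otimes>_{R_p} M for a generic construction M p1 p2 q1 q2 r1 r2 C: substitute the images.\<close>
definition base_change ::
  "(R \<Rightarrow> R \<Rightarrow> R \<Rightarrow> R \<Rightarrow> R \<Rightarrow> R \<Rightarrow> R \<Rightarrow> R mat) \<Rightarrow> nat \<Rightarrow> R mat" where
  "base_change M N = M (xv 2 + xv 4) (yv 2 + yv 4) (xv 3 + xv 4) (yv 3 + yv 4)
                       (xv 1 + xv 4) (yv 1 + yv 4) (phiC N)"

definition A_cmn :: "nat \<Rightarrow> R" where
  "A_cmn N = - (yv 3 + yv 4) * (yv 1 + yv 2 + yv 4) - yv 1 * yv 2 + wd2 N (- xv 1) (xv 3)
     + (xv 2 + xv 4) * wd3 N (xv 1) (xv 2) (- xv 3)
     - (xv 2 + xv 4) * (xv 1 + xv 4) * (wd4 N (xv 1) (- xv 1) (xv 2) (xv 4) + wd4 N (xv 1) (- xv 1) (- xv 2) (xv 4))"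

definition B_cmn :: R where
  "B_cmn = xv 1 * yv 1 + xv 2 * yv 2 + xv 3 * yv 3 - xv 4 * yv 4"

definition K_cmn :: "nat \<Rightarrow> R mat" where
  "K_cmn N = koszul2 (xv 1 + xv 2 + xv 3 + xv 4) (A_cmn N) (yv 1 + yv 2 + yv 3 + yv 4) B_cmn"

section \<open>The factorizations K_cmn \<otimes> (R \<otimes>_{R_p} gamma_p) (\<cong> gamma-hat) and the saddle morphisms\<close>

definition D_total :: "nat \<Rightarrow> (R \<Rightarrow> R \<Rightarrow> R \<Rightarrow> R \<Rightarrow> R \<Rightarrow> R \<Rightarrow> R \<Rightarrow> R mat) \<Rightarrow> R mat" where
  "D_total N gp = tensor_D (K_cmn N) par_koszul2 (base_change gp N)"

definition par_total :: "nat \<Rightarrow> bool" where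
  "par_total = tensor_par par_koszul2 4 par22"

definition F_sad :: "nat \<Rightarrow> R mat" where
  "F_sad N = kron (1\<^sub>m 4) (base_change Fsad_p N)"
definition G_sad :: "nat \<Rightarrow> R mat" where
  "G_sad N = kron (1\<^sub>m 4) (base_change Gsad_p N)"

definition null_homotopic :: "nat \<Rightarrow> (nat \<Rightarrow> bool) \<Rightarrow> R mat \<Rightarrow> R mat \<Rightarrow> R mat \<Rightarrow> bool" where
  "null_homotopic n par Dsrc Dtgt f \<longleftrightarrow>
     (\<exists>X \<in> carrier_mat n n.
        (\<forall>i<n. \<forall>j<n. in_R (X $$ (i, j))) \<and>
        (\<forall>i<n. \<forall>j<n. par i = par j \<longrightarrow> X $$ (i, j) = 0) \<and>
        f = Dtgt * X + X * Dsrc)"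

end

theory Submission
  imports Defs
begin

text \<open>
  Over any commutative ring the proper saddle composite is null-homotopic via an explicit odd
  homotopy H_p, namely G_p F_p = D_hor H_p + H_p D_par.  Tensoring with the identity of K_cmn
  preserves this: if \<epsilon> is the grading operator of K_cmn, then \<epsilon> \<otimes> H_p is a homotopy for
  1 \<otimes> G_p F_p, because the odd differential of K_cmn anticommutes with \<epsilon> and \<epsilon> \<epsilon> = 1.
  It remains to see that this homotopy has entries in R, i.e. that the image of C is a polynomial
  in x_1, ..., x_4: iterated divided differences of x^n at distinct points are complete
  homogeneous symmetric polynomials.
\<close>

section \<open>Kronecker products\<close>

lemma sum_lessThan_mult_nat:
  fixes a b :: nat
  shows "(\<Sum>k<a * b. f k) = (\<Sum>u<a. \<Sum>v<b. f (u * b + v))"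
proof -
  have "sum f {u * b..<u * b + b} = (\<Sum>v<b. f (u * b + v))" for u
    using sum.atLeastLessThan_shift_bounds[of f 0 "u * b" b]
    by (simp add: comp_def lessThan_atLeast0 add.commute)
  then show ?thesis
    by (simp add: sum.nat_group[symmetric])
qed

lemma kron_carrier_mat [simp]:
  "kron A B \<in> carrier_mat (dim_row A * dim_row B) (dim_col A * dim_col B)"
  by (simp add: kron_def)

lemma dim_kron [simp]:
  "dim_row (kron A B) = dim_row A * dim_row B"
  "dim_col (kron A B) = dim_col A * dim_col B"
  by (simp_all add: kron_def)

lemma index_kron [simp]:
  "i < dim_row A * dim_row B \<Longrightarrow> j < dim_col A * dim_col B \<Longrightarrow>
   kron A B $$ (i, j) = A $$ (i div dim_row B, j div dim_col B) * B $$ (i mod dim_row B, j mod dim_col B)"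
  by (simp add: kron_def)

lemma div_mod_less_mult:
  fixes i a b :: nat
  assumes "i < a * b"
  shows "i div b < a" "i mod b < b"
  using assms by (simp add: less_mult_imp_div_less) (cases "b = 0"; use assms in simp)

lemma kron_mult:
  fixes A :: "'a::comm_semiring_1 mat"
  assumes A: "A \<in> carrier_mat m n" and B: "B \<in> carrier_mat p q"
    and C: "C \<in> carrier_mat n r" and D: "D \<in> carrier_mat q s"
  shows "kron A B * kron C D = kron (A * C) (B * D)"
proof (rule eq_matI)
  fix i j
  assume "i < dim_row (kron (A * C) (B * D))" and "j < dim_col (kron (A * C) (B * D))"
  with A B C D have i: "i < m * p" and j: "j < r * s"
    by auto
  have "(kron A B * kron C D) $$ (i, j) = (\<Sum>k<n * q. kron A B $$ (i, k) * kron C D $$ (k, j))"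
    using A B C D i j by (simp add: scalar_prod_def atLeast0LessThan)
  also have "\<dots> = (\<Sum>u<n. \<Sum>v<q. kron A B $$ (i, u * q + v) * kron C D $$ (u * q + v, j))"
    by (rule sum_lessThan_mult_nat)
  also have "\<dots> = (\<Sum>u<n. \<Sum>v<q. (A $$ (i div p, u) * C $$ (u, j div s))
                                    * (B $$ (i mod p, v) * D $$ (v, j mod s)))"
  proof (intro sum.cong refl)
    fix u v
    assume u: "u \<in> {..<n}" and v: "v \<in> {..<q}"
    then have "u * q + v < Suc u * q"
      by simp
    also have "\<dots> \<le> n * q"
      using u by (intro mult_le_mono1) simp
    finally have "u * q + v < n * q" .
    then show "kron A B $$ (i, u * q + v) * kron C D $$ (u * q + v, j)
             = (A $$ (i div p, u) * C $$ (u, j div s)) * (B $$ (i mod p, v) * D $$ (v, j mod s))"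
      using A B C D i j u v by (simp add: ac_simps)
  qed
  also have "\<dots> = (\<Sum>u<n. A $$ (i div p, u) * C $$ (u, j div s))
                 * (\<Sum>v<q. B $$ (i mod p, v) * D $$ (v, j mod s))"
    by (simp add: sum_product)
  also have "\<dots> = kron (A * C) (B * D) $$ (i, j)"
    using A B C D i j div_mod_less_mult[OF i] div_mod_less_mult[OF j]
    by (simp add: scalar_prod_def atLeast0LessThan)
  finally show "(kron A B * kron C D) $$ (i, j) = kron (A * C) (B * D) $$ (i, j)" .
qed (use A B C D in auto)

lemma kron_add_left:
  "A \<in> carrier_mat m n \<Longrightarrow> B \<in> carrier_mat m n \<Longrightarrow>
   kron (A + B) C = kron A C + kron B C"
  by (intro eq_matI) (auto simp: distrib_right div_mod_less_mult)

lemma kron_add_right: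
  "B \<in> carrier_mat m n \<Longrightarrow> C \<in> carrier_mat m n \<Longrightarrow>
   kron A (B + C) = kron A B + kron A C"
  by (intro eq_matI) (auto simp: distrib_left div_mod_less_mult)

lemma kron_zero_left: "kron (0\<^sub>m m n) B = 0\<^sub>m (m * dim_row B) (n * dim_col B)"
  by (intro eq_matI) (auto simp: div_mod_less_mult)

lemma in_R_0: "in_R 0"
  by (simp add: in_R_def)

lemma in_R_1: "in_R 1"
  by (simp add: in_R_def)

lemma in_R_add: "in_R f \<Longrightarrow> in_R g \<Longrightarrow> in_R (f + g)"
  unfolding in_R_def using keys_add[of f g] by blast

lemma in_R_uminus: "in_R f \<Longrightarrow> in_R (- f)"
  by (simp add: in_R_def)

lemma in_R_diff: "in_R f \<Longrightarrow> in_R g \<Longrightarrow> in_R (f - g)"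
  unfolding in_R_def using keys_diff[of f g] by blast

lemma in_R_mult:
  assumes "in_R f" "in_R g"
  shows "in_R (f * g)"
  unfolding in_R_def
proof
  fix m
  assume "m \<in> Poly_Mapping.keys (f * g)"
  then obtain a b where "m = a + b" "a \<in> Poly_Mapping.keys f" "b \<in> Poly_Mapping.keys g"
    using keys_mult[of f g] by blast
  with assms show "Poly_Mapping.keys m \<subseteq> {..<8}"
    using keys_add[of a b] unfolding in_R_def by blast
qed

lemma in_R_xv: "1 \<le> i \<Longrightarrow> i \<le> 4 \<Longrightarrow> in_R (xv i)"
  by (simp add: xv_def Var_def in_R_def)

lemma in_R_yv: "i \<le> 4 \<Longrightarrow> in_R (yv i)"
  by (simp add: yv_def Var_def in_R_def)

fun complete_homogeneous :: "nat \<Rightarrow> 'a::comm_ring_1 list \<Rightarrow> 'a" where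
  "complete_homogeneous 0 xs = 1"
| "complete_homogeneous (Suc k) [] = 0"
| "complete_homogeneous (Suc k) (x # xs) =
     complete_homogeneous (Suc k) xs + x * complete_homogeneous k (x # xs)"

lemma complete_homogeneous_singleton: "complete_homogeneous k [a] = a ^ k"
  by (induction k) auto

lemma complete_homogeneous_diff:
  "complete_homogeneous (Suc k) (T @ b # S) - complete_homogeneous (Suc k) (T @ c # S)
   = (b - c) * complete_homogeneous k (T @ b # c # S)"
proof (induction T arbitrary: k)
  case Nil
  show ?case
  proof (induction k)
    case 0
    then show ?case by simp
  next
    case (Suc k)
    let ?h = complete_homogeneous
    have "(b - c) * ?h (Suc k) (b # c # S)
        = (b - c) * ?h (Suc k) (c # S) + b * ((b - c) * ?h k (b # c # S))"
      by (simp add: algebra_simps)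
    also have "\<dots> = (b - c) * ?h (Suc k) (c # S) + b * (?h (Suc k) (b # S) - ?h (Suc k) (c # S))"
      using Suc by simp
    also have "\<dots> = ?h (Suc (Suc k)) (b # S) - ?h (Suc (Suc k)) (c # S)"
      by (simp add: algebra_simps)
    finally show ?case
      by simp
  qed
next
  case (Cons t T)
  show ?case
  proof (induction k)
    case 0
    then show ?case using Cons.IH[of 0] by simp
  next
    case (Suc k)
    let ?h = complete_homogeneous
    have "?h (Suc (Suc k)) ((t # T) @ b # S) - ?h (Suc (Suc k)) ((t # T) @ c # S)
      = (?h (Suc (Suc k)) (T @ b # S) - ?h (Suc (Suc k)) (T @ c # S))
        + t * (?h (Suc k) ((t # T) @ b # S) - ?h (Suc k) ((t # T) @ c # S))"
      by (simp add: algebra_simps)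
    also have "\<dots> = (b - c) * ?h (Suc k) (T @ b # c # S) + t * ((b - c) * ?h k ((t # T) @ b # c # S))"
      using Suc Cons.IH[of "Suc k"] by simp
    also have "\<dots> = (b - c) * ?h (Suc k) ((t # T) @ b # c # S)"
      by (simp add: algebra_simps)
    finally show ?case .
  qed
qed

lemma divq_eqI: "d \<noteq> 0 \<Longrightarrow> d * q = n \<Longrightarrow> divq n d = q"
  unfolding divq_def by (rule someI2[where a = q]) auto

lemma wd2_eq: "a \<noteq> b \<Longrightarrow> wd2 N a b = complete_homogeneous (2 * N) [a, b]"
  unfolding wd2_def wd1_def
  by (rule divq_eqI) (use complete_homogeneous_diff[of "2 * N" "[]" a "[]" b] in
      \<open>auto simp: complete_homogeneous_singleton\<close>)

lemma wd3_eq: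
  assumes "distinct [a, b, c]" "1 \<le> N"
  shows "wd3 N a b c = complete_homogeneous (2 * N - 1) [a, b, c]"
proof -
  have "Suc (2 * N - 1) = 2 * N"
    using assms(2) by simp
  then show ?thesis
    using assms complete_homogeneous_diff[of "2 * N - 1" "[a]" b "[]" c]
    unfolding wd3_def by (intro divq_eqI) (auto simp: wd2_eq)
qed

lemma wd4_eq:
  assumes "distinct [a, b, c, d]" "1 \<le> N"
  shows "wd4 N a b c d = complete_homogeneous (2 * N - 2) [a, b, c, d]"
proof -
  have "Suc (2 * N - 2) = 2 * N - 1"
    using assms(2) by simp
  then show ?thesis
    using assms complete_homogeneous_diff[of "2 * N - 2" "[a, b]" c "[]" d]
    unfolding wd4_def by (intro divq_eqI) (auto simp: wd3_eq)
qed

lemma in_R_complete_homogeneous: "\<forall>x\<in>set xs. in_R x \<Longrightarrow> in_R (complete_homogeneous k xs)"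
  by (induction k xs rule: complete_homogeneous.induct) (auto simp: in_R_0 in_R_1 in_R_add in_R_mult)

definition lin_coeff :: "R \<Rightarrow> nat \<Rightarrow> rat" where
  "lin_coeff f i = Poly_Mapping.lookup f (Poly_Mapping.single i 1)"

lemma lin_coeff_Var [simp]: "lin_coeff (Var i) j = (if i = j then 1 else 0)"
proof -
  have "Poly_Mapping.single i (1::nat) = Poly_Mapping.single j 1 \<longleftrightarrow> i = j"
    by (metis lookup_single_eq lookup_single_not_eq zero_neq_one)
  then show ?thesis
    by (simp add: lin_coeff_def Var_def lookup_single)
qed

lemma lin_coeff_uminus [simp]: "lin_coeff (- f) i = - lin_coeff f i"
  by (simp add: lin_coeff_def)

lemma distinct_if_lin_coeffs_distinct:
  "distinct (map (\<lambda>f. map (lin_coeff f) ks) fs) \<Longrightarrow> distinct fs"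
  by (simp add: distinct_map)

lemma phiC_in_R:
  assumes "1 \<le> N"
  shows "in_R (phiC N)"
proof -
  have "distinct [xv 1, xv 2, - xv 3, xv 4]" "distinct [xv 1, - xv 1, xv 2, xv 4]"
    "distinct [xv 1, - xv 1, - xv 2, xv 4]"
    by (rule distinct_if_lin_coeffs_distinct[where ks = "[0, 1, 2, 3]"]; simp add: xv_def)+
  then show ?thesis
    unfolding phiC_def using assms
    by (simp add: wd4_eq in_R_add in_R_uminus in_R_xv in_R_complete_homogeneous)
qed

section \<open>Odd matrices and the grading operator\<close>

definition odd_mat :: "nat \<Rightarrow> (nat \<Rightarrow> bool) \<Rightarrow> 'a::zero mat \<Rightarrow> bool" where
  "odd_mat n par X \<longleftrightarrow> (\<forall>i<n. \<forall>j<n. par i = par j \<longrightarrow> X $$ (i, j) = 0)"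

lemma gsign_carrier_mat [simp]: "gsign n par \<in> carrier_mat n n"
  by (simp add: gsign_def)

lemma dim_gsign [simp]: "dim_row (gsign n par) = n" "dim_col (gsign n par) = n"
  by (simp_all add: gsign_def)

lemma index_gsign_mult:
  assumes "A \<in> carrier_mat n m" "i < n" "j < m"
  shows "(gsign n par * A) $$ (i, j) = (if par i then - A $$ (i, j) else A $$ (i, j))"
  using assms by (simp add: gsign_def scalar_prod_def if_distrib[of "\<lambda>x. x * _"] cong: if_cong)

lemma index_mult_gsign:
  assumes "A \<in> carrier_mat m n" "i < m" "j < n"
  shows "(A * gsign n par) $$ (i, j) = (if par j then - A $$ (i, j) else A $$ (i, j))"
  using assms by (simp add: gsign_def scalar_prod_def if_distrib[of "\<lambda>x. _ * x"] cong: if_cong)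

lemma gsign_mult_gsign: "gsign n par * gsign n par = (1\<^sub>m n :: 'a::ring_1 mat)"
proof (rule eq_matI)
  fix i j
  assume "i < dim_row (1\<^sub>m n :: 'a mat)" "j < dim_col (1\<^sub>m n :: 'a mat)"
  then show "(gsign n par * gsign n par) $$ (i, j) = (1\<^sub>m n :: 'a mat) $$ (i, j)"
    by (simp add: index_gsign_mult[of "gsign n par" n n] del: index_mult_mat) (simp add: gsign_def)
qed auto

lemma odd_mat_anticommutes_gsign:
  fixes A :: "'a::ring_1 mat"
  assumes A: "A \<in> carrier_mat n n" and odd: "odd_mat n par A"
  shows "A * gsign n par + gsign n par * A = 0\<^sub>m n n"
proof (rule eq_matI)
  fix i j
  assume "i < dim_row (0\<^sub>m n n :: 'a mat)" "j < dim_col (0\<^sub>m n n :: 'a mat)"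
  then have ij: "i < n" "j < n"
    by simp_all
  have "(A * gsign n par) $$ (i, j) + (gsign n par * A) $$ (i, j) = 0"
    using odd ij unfolding index_gsign_mult[OF A ij] index_mult_gsign[OF A ij] odd_mat_def
    by auto
  with A ij show "(A * gsign n par + gsign n par * A) $$ (i, j) = 0\<^sub>m n n $$ (i, j)"
    by simp
qed (use A in auto)

lemma odd_mat_kron_gsign:
  fixes H :: "'a::ring_1 mat"
  assumes "H \<in> carrier_mat m m" "odd_mat m parB H"
  shows "odd_mat (n * m) (tensor_par parA m parB) (kron (gsign n parA) H)"
  using assms div_mod_less_mult
  by (auto simp: odd_mat_def tensor_par_def gsign_def)

lemma odd_mat_tensor_D:
  fixes DA :: "'a::comm_ring_1 mat"
  assumes DA: "DA \<in> carrier_mat n n" "odd_mat n parA DA"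
    and DB: "DB \<in> carrier_mat m m" "odd_mat m parB DB"
  shows "odd_mat (n * m) (tensor_par parA m parB) (tensor_D DA parA DB)"
  unfolding odd_mat_def
proof (intro allI impI)
  fix i j
  assume ij: "i < n * m" "j < n * m" and "tensor_par parA m parB i = tensor_par parA m parB j"
  then have par: "(parA (i div m) = parA (j div m)) = (parB (i mod m) = parB (j mod m))"
    by (auto simp: tensor_par_def)
  have "DA $$ (i div m, j div m) * 1\<^sub>m m $$ (i mod m, j mod m) = 0"
    using DA par ij div_mod_less_mult by (auto simp: odd_mat_def)
  moreover have "gsign n parA $$ (i div m, j div m) * DB $$ (i mod m, j mod m) = (0 :: 'a)"
    using DB par ij div_mod_less_mult by (auto simp: odd_mat_def gsign_def)
  ultimately show "tensor_D DA parA DB $$ (i, j) = 0"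
    using ij by (simp add: tensor_D_def carrier_matD[OF DA(1)] carrier_matD[OF DB(1)])
qed

lemma id_kron_homotopy:
  fixes DA :: "'a::comm_ring_1 mat"
  assumes DA: "DA \<in> carrier_mat n n" "odd_mat n parA DA"
    and carrier: "D \<in> carrier_mat m m" "D' \<in> carrier_mat m m" "H \<in> carrier_mat m m"
      "g \<in> carrier_mat m m" "f \<in> carrier_mat m m"
    and homotopy: "g * f = D' * H + H * D"
  shows "kron (1\<^sub>m n) g * kron (1\<^sub>m n) f
       = tensor_D DA parA D' * kron (gsign n parA) H + kron (gsign n parA) H * tensor_D DA parA D"
proof -
  define E where "E = (gsign n parA :: 'a mat)"
  have E: "E \<in> carrier_mat n n" "E * E = 1\<^sub>m n" "DA * E + E * DA = 0\<^sub>m n n"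
    unfolding E_def using DA by (simp_all add: gsign_mult_gsign odd_mat_anticommutes_gsign)
  have kron_carrier: "kron X Y \<in> carrier_mat (n * m) (n * m)"
    if "X \<in> carrier_mat n n" "Y \<in> carrier_mat m m" for X Y :: "'a mat"
    using that by auto
  have tensor_D_eq: "tensor_D DA parA Y = kron DA (1\<^sub>m m) + kron E Y"
    if "Y \<in> carrier_mat m m" for Y
    using that DA by (simp add: tensor_D_def E_def carrier_matD)
  have left: "tensor_D DA parA D' * kron E H = kron (DA * E) H + kron (1\<^sub>m n) (D' * H)"
  proof -
    have "tensor_D DA parA D' * kron E H = kron DA (1\<^sub>m m) * kron E H + kron E D' * kron E H"
      unfolding tensor_D_eq[OF carrier(2)] using DA E carrier kron_carrier
      by (intro add_mult_distrib_mat) auto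
    also have "\<dots> = kron (DA * E) H + kron (1\<^sub>m n) (D' * H)"
      using kron_mult[OF DA(1) one_carrier_mat E(1) carrier(3)]
        kron_mult[OF E(1) carrier(2) E(1) carrier(3)]
        E(2) carrier(3) by simp
    finally show ?thesis .
  qed
  have right: "kron E H * tensor_D DA parA D = kron (E * DA) H + kron (1\<^sub>m n) (H * D)"
  proof -
    have "kron E H * tensor_D DA parA D = kron E H * kron DA (1\<^sub>m m) + kron E H * kron E D"
      unfolding tensor_D_eq[OF carrier(1)] using DA E carrier kron_carrier
      by (intro mult_add_distrib_mat) auto
    also have "\<dots> = kron (E * DA) H + kron (1\<^sub>m n) (H * D)"
      using kron_mult[OF E(1) carrier(3) DA(1) one_carrier_mat]
        kron_mult[OF E(1) carrier(3) E(1) carrier(1)]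
        E(2) carrier(3) by simp
    finally show ?thesis .
  qed
  have "tensor_D DA parA D' * kron E H + kron E H * tensor_D DA parA D
      = (kron (DA * E) H + kron (E * DA) H) + (kron (1\<^sub>m n) (D' * H) + kron (1\<^sub>m n) (H * D))"
    unfolding left right using DA E carrier by (intro eq_matI) (simp_all add: ac_simps)
  also have "\<dots> = kron (DA * E + E * DA) H + kron (1\<^sub>m n) (D' * H + H * D)"
    using DA(1) E(1) carrier by (simp add: kron_add_left[of _ n n] kron_add_right[of _ m m])
  also have "\<dots> = kron (1\<^sub>m n) (g * f)"
    unfolding E(3) homotopy kron_zero_left using carrier by (intro left_add_zero_mat) auto
  also have "\<dots> = kron (1\<^sub>m n) g * kron (1\<^sub>m n) f"
    using kron_mult[OF one_carrier_mat carrier(4) one_carrier_mat carrier(5)] by simp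
  finally show ?thesis
    unfolding E_def ..
qed

lemma null_homotopic_id_kron:
  assumes DA: "DA \<in> carrier_mat n n" "odd_mat n parA DA"
    and carrier: "D \<in> carrier_mat m m" "D' \<in> carrier_mat m m" "H \<in> carrier_mat m m"
      "g \<in> carrier_mat m m" "f \<in> carrier_mat m m"
    and H: "odd_mat m parB H" "\<forall>i<m. \<forall>j<m. in_R (H $$ (i, j))"
    and homotopy: "g * f = D' * H + H * D"
  shows "null_homotopic (n * m) (tensor_par parA m parB) (tensor_D DA parA D) (tensor_D DA parA D')
           (kron (1\<^sub>m n) g * kron (1\<^sub>m n) f)"
  unfolding null_homotopic_def
proof (intro bexI conjI allI impI)
  let ?X = "kron (gsign n parA) H"
  show "?X \<in> carrier_mat (n * m) (n * m)"
    using carrier by auto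
  show "kron (1\<^sub>m n) g * kron (1\<^sub>m n) f = tensor_D DA parA D' * ?X + ?X * tensor_D DA parA D"
    by (rule id_kron_homotopy[OF DA carrier homotopy])
  show "?X $$ (i, j) = 0" if "i < n * m" "j < n * m"
    "tensor_par parA m parB i = tensor_par parA m parB j" for i j
    using odd_mat_kron_gsign[OF carrier(3) H(1), of n parA] that by (simp add: odd_mat_def)
  show "in_R (?X $$ (i, j))" if "i < n * m" "j < n * m" for i j
    using that carrier(3) H(2) div_mod_less_mult[OF that(1)] div_mod_less_mult[OF that(2)]
    by (auto simp: gsign_def intro!: in_R_mult in_R_0 in_R_1 in_R_uminus)
qed

lemma koszul1_carrier_mat: "koszul1 a b \<in> carrier_mat 2 2"
  by (simp add: koszul1_def)

lemma odd_mat_koszul1: "odd_mat 2 par_koszul1 (koszul1 a b)"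
  by (auto simp: odd_mat_def koszul1_def par_koszul1_def)

lemma koszul2_carrier_mat: "koszul2 a1 b1 a2 b2 \<in> carrier_mat 4 4"
  unfolding carrier_mat_def by (simp add: koszul2_def tensor_D_def koszul1_def)

lemma odd_mat_koszul2: "odd_mat 4 par_koszul2 (koszul2 a1 b1 a2 b2)"
  using odd_mat_tensor_D[OF koszul1_carrier_mat odd_mat_koszul1 koszul1_carrier_mat odd_mat_koszul1]
  by (simp add: koszul2_def par_koszul2_def)

lemma mat22_carrier_mat [simp]: "mat22 a b c d \<in> carrier_mat 2 2"
  by (simp add: mat22_def)

lemma mat22_mult:
  "mat22 a b c d * mat22 a' b' c' d'
   = mat22 (a * a' + b * c') (a * b' + b * d') (c * a' + d * c') (c * b' + d * d' :: 'a::semiring_0)"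
  by (intro eq_matI) (auto simp: mat22_def scalar_prod_def numeral_2_eq_2 less_Suc_eq)

lemma mat22_add:
  "mat22 a b c d + mat22 a' b' c' d' = mat22 (a + a') (b + b') (c + c') (d + d' :: 'a::plus)"
  by (intro eq_matI) (auto simp: mat22_def)

lemma mf22_carrier_mat [simp]:
  "P \<in> carrier_mat 2 2 \<Longrightarrow> Q \<in> carrier_mat 2 2 \<Longrightarrow> mf22 P Q \<in> carrier_mat 4 4"
  by (auto simp: mf22_def)

lemma mor22_carrier_mat [simp]:
  "A \<in> carrier_mat 2 2 \<Longrightarrow> B \<in> carrier_mat 2 2 \<Longrightarrow> mor22 A B \<in> carrier_mat 4 4"
  by (auto simp: mor22_def)

lemma mf22_mult_mf22:
  fixes P :: "'a::semiring_0 mat"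
  assumes "P \<in> carrier_mat 2 2" "Q \<in> carrier_mat 2 2" "P' \<in> carrier_mat 2 2" "Q' \<in> carrier_mat 2 2"
  shows "mf22 P Q * mf22 P' Q' = mor22 (P * Q') (Q * P')"
  using assms mult_four_block_mat[OF zero_carrier_mat assms(1,2) zero_carrier_mat
      zero_carrier_mat assms(3,4) zero_carrier_mat]
  by (simp add: mf22_def mor22_def)

lemma mor22_mult_mor22:
  fixes A :: "'a::semiring_0 mat"
  assumes "A \<in> carrier_mat 2 2" "B \<in> carrier_mat 2 2" "A' \<in> carrier_mat 2 2" "B' \<in> carrier_mat 2 2"
  shows "mor22 A B * mor22 A' B' = mor22 (A * A') (B * B')"
  using assms mult_four_block_mat[OF assms(1) zero_carrier_mat zero_carrier_mat assms(2)
      assms(3) zero_carrier_mat zero_carrier_mat assms(4)]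
  by (simp add: mor22_def)

lemma mor22_add:
  fixes A :: "'a::monoid_add mat"
  assumes "A \<in> carrier_mat 2 2" "B \<in> carrier_mat 2 2" "A' \<in> carrier_mat 2 2" "B' \<in> carrier_mat 2 2"
  shows "mor22 A B + mor22 A' B' = mor22 (A + A') (B + B')"
  using assms add_four_block_mat[OF assms(1) zero_carrier_mat zero_carrier_mat assms(2)
      assms(3) zero_carrier_mat zero_carrier_mat assms(4)]
  by (simp add: mor22_def)

lemma odd_mat_mf22:
  "P \<in> carrier_mat 2 2 \<Longrightarrow> Q \<in> carrier_mat 2 2 \<Longrightarrow> odd_mat 4 par22 (mf22 P Q)"
  by (auto simp: odd_mat_def par22_def mf22_def)

section \<open>The saddle homotopy\<close>

definition saddle_homotopy_p ::
    "'a::comm_ring_1 \<Rightarrow> 'a \<Rightarrow> 'a \<Rightarrow> 'a \<Rightarrow> 'a \<Rightarrow> 'a \<Rightarrow> 'a \<Rightarrow> 'a mat" where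
  "saddle_homotopy_p p1 p2 q1 q2 r1 r2 C =
     mf22 (mat22 0 0 (- (p1 * C)) (- p2)) (mat22 q2 0 (- (q1 * C)) 0)"

lemma Gsad_Fsad_homotopy_p:
  "Gsad_p p1 p2 q1 q2 r1 r2 C * Fsad_p p1 p2 q1 q2 r1 r2 C
   = ghor_p p1 p2 q1 q2 r1 r2 C * saddle_homotopy_p p1 p2 q1 q2 r1 r2 C
     + saddle_homotopy_p p1 p2 q1 q2 r1 r2 C * gpar_p p1 p2 q1 q2 r1 r2 C"
  unfolding Gsad_p_def Fsad_p_def ghor_p_def gpar_p_def saddle_homotopy_p_def
  by (simp add: mf22_mult_mf22 mor22_mult_mor22 mor22_add mat22_mult mat22_add)
     (simp add: algebra_simps power2_eq_square)

lemma base_change_carrier_mat: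
  "base_change gpar_p N \<in> carrier_mat 4 4" "base_change ghor_p N \<in> carrier_mat 4 4"
  "base_change Fsad_p N \<in> carrier_mat 4 4" "base_change Gsad_p N \<in> carrier_mat 4 4"
  "base_change saddle_homotopy_p N \<in> carrier_mat 4 4"
  by (simp_all add: base_change_def gpar_p_def ghor_p_def Fsad_p_def Gsad_p_def saddle_homotopy_p_def)

lemma in_R_saddle_homotopy:
  assumes "1 \<le> N"
  shows "\<forall>i<4. \<forall>j<4. in_R (base_change saddle_homotopy_p N $$ (i, j))"
  using phiC_in_R[OF assms]
  by (auto simp: base_change_def saddle_homotopy_p_def mf22_def mat22_def
      in_R_0 in_R_add in_R_diff in_R_mult in_R_uminus in_R_xv in_R_yv)

theorem mainTheorem4:
  fixes N :: nat
  assumes "1 \<le> N"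
  shows "null_homotopic 16 par_total (D_total N gpar_p) (D_total N ghor_p) (G_sad N * F_sad N)"
proof -
  let ?bc = "\<lambda>M. base_change M N"
  have "null_homotopic (4 * 4) (tensor_par par_koszul2 4 par22)
          (tensor_D (K_cmn N) par_koszul2 (?bc gpar_p)) (tensor_D (K_cmn N) par_koszul2 (?bc ghor_p))
          (kron (1\<^sub>m 4) (?bc Gsad_p) * kron (1\<^sub>m 4) (?bc Fsad_p))"
  proof (rule null_homotopic_id_kron)
    show "K_cmn N \<in> carrier_mat 4 4" "odd_mat 4 par_koszul2 (K_cmn N)"
      unfolding K_cmn_def by (rule koszul2_carrier_mat odd_mat_koszul2)+
    show "odd_mat 4 par22 (?bc saddle_homotopy_p)"
      unfolding base_change_def saddle_homotopy_p_def by (simp add: odd_mat_mf22)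
    show "\<forall>i<4. \<forall>j<4. in_R (?bc saddle_homotopy_p $$ (i, j))"
      using assms by (rule in_R_saddle_homotopy)
    show "?bc Gsad_p * ?bc Fsad_p
        = ?bc ghor_p * ?bc saddle_homotopy_p + ?bc saddle_homotopy_p * ?bc gpar_p"
      unfolding base_change_def by (rule Gsad_Fsad_homotopy_p)
  qed (rule base_change_carrier_mat)+
  then show ?thesis
    by (simp add: D_total_def par_total_def G_sad_def F_sad_def)
qed

end
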